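(* Let $f$ be a periodic traveling wave of speed $c$ with $c\neq 0$ and $c^2\neq1$. If $\lambda\in\sigma(\mathrm{P})$ and $\operatorname{Re}\lambda\neq 0$, then exactly one of the two Floquet multipliers of (P) lies on the unit circle.
   Context: A traveling wave of speed $c$ is a real solution $f$ of $(c^2-1)f''+\sin f=0$, with energy $E$ given by $\tfrac12(c^2-1)(f')^2+1-\cos f=E$; periodic traveling waves are librational ($0<E<2$) or rotational ($E<0$ if $c^2<1$, $E>2$ if $c^2>1$), with fundamental period $T$ (smallest $T>0$ with $f(z+T)=f(z)\pmod{2\pi}$). Let $\gamma=1/(c^2-1)$. Equation (P): $p''-2c\gamma\lambda p'+\gamma(\lambda^2+\cos f(z))p=0$, written as a first-order system for $(p,p')$; its monodromy matrix is $F(T;\lambda)$ where $F$ is the fundamental matrix with $F(0;\lambda)=I$, and its Floquet multipliers are the eigenvalues of the monodromy matrix. $\sigma(\mathrm{P})$ is the set of $\lambda\in\mathbb{C}$ for which (P) has a nontrivial solution bounded on $\mathbb{R}$. *)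

theory Defs
  imports "HOL-Analysis.Analysis"
begin

definition traveling_wave :: "real \<Rightarrow> (real \<Rightarrow> real) \<Rightarrow> bool" where
  "traveling_wave c f \<longleftrightarrow>
     (\<forall>z. f differentiable (at z) \<and> deriv f differentiable (at z) \<and>
          (c\<^sup>2 - 1) * deriv (deriv f) z + sin (f z) = 0)"

text \<open>Energy (constant along a traveling wave; evaluated at z = 0).\<close>
definition energy :: "real \<Rightarrow> (real \<Rightarrow> real) \<Rightarrow> real" where
  "energy c f = (1/2) * (c\<^sup>2 - 1) * (deriv f 0)\<^sup>2 + 1 - cos (f 0)"

definition librational :: "real \<Rightarrow> (real \<Rightarrow> real) \<Rightarrow> bool" where
  "librational c f \<longleftrightarrow> 0 < energy c f \<and> energy c f < 2"

definition rotational :: "real \<Rightarrow> (real \<Rightarrow> real) \<Rightarrow> bool" where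
  "rotational c f \<longleftrightarrow> (c\<^sup>2 < 1 \<and> energy c f < 0) \<or> (c\<^sup>2 > 1 \<and> energy c f > 2)"

definition periodic_tw :: "real \<Rightarrow> (real \<Rightarrow> real) \<Rightarrow> bool" where
  "periodic_tw c f \<longleftrightarrow> traveling_wave c f \<and> (librational c f \<or> rotational c f)"

definition period_mod_2pi :: "(real \<Rightarrow> real) \<Rightarrow> real \<Rightarrow> bool" where
  "period_mod_2pi f T \<longleftrightarrow> (\<forall>z. \<exists>k::int. f (z + T) = f z + 2 * pi * of_int k)"

definition fundamental_period :: "(real \<Rightarrow> real) \<Rightarrow> real \<Rightarrow> bool" where
  "fundamental_period f T \<longleftrightarrow> T > 0 \<and> period_mod_2pi f T \<and>
      (\<forall>S. 0 < S \<and> S < T \<longrightarrow> \<not> period_mod_2pi f S)"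

definition gam :: "real \<Rightarrow> real" where
  "gam c = 1 / (c\<^sup>2 - 1)"

definition solP :: "real \<Rightarrow> (real \<Rightarrow> real) \<Rightarrow> complex \<Rightarrow> (real \<Rightarrow> complex) \<Rightarrow> (real \<Rightarrow> complex) \<Rightarrow> bool" where
  "solP c f lam p q \<longleftrightarrow>
     (\<forall>z. (p has_vector_derivative q z) (at z) \<and>
          (q has_vector_derivative
             (of_real (2 * c * gam c) * lam * q z
              - of_real (gam c) * (lam\<^sup>2 + of_real (cos (f z))) * p z)) (at z))"

definition sigmaP :: "real \<Rightarrow> (real \<Rightarrow> real) \<Rightarrow> complex set" where
  "sigmaP c f = {lam. \<exists>p q. solP c f lam p q \<and> (\<exists>z. p z \<noteq> 0) \<and> bounded (range p)}"

definition fundamental_sols ::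
  "real \<Rightarrow> (real \<Rightarrow> real) \<Rightarrow> complex \<Rightarrow> (real \<Rightarrow> complex) \<Rightarrow> (real \<Rightarrow> complex)
     \<Rightarrow> (real \<Rightarrow> complex) \<Rightarrow> (real \<Rightarrow> complex) \<Rightarrow> bool" where
  "fundamental_sols c f lam p1 q1 p2 q2 \<longleftrightarrow>
     solP c f lam p1 q1 \<and> solP c f lam p2 q2 \<and>
     p1 0 = 1 \<and> q1 0 = 0 \<and> p2 0 = 0 \<and> q2 0 = 1"

definition fund_matrix ::
  "(real \<Rightarrow> complex) \<Rightarrow> (real \<Rightarrow> complex) \<Rightarrow> (real \<Rightarrow> complex) \<Rightarrow> (real \<Rightarrow> complex)
     \<Rightarrow> real \<Rightarrow> complex^2^2" where
  "fund_matrix p1 q1 p2 q2 z =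
     (\<chi> i j. if i = 1 then (if j = 1 then p1 z else p2 z)
             else (if j = 1 then q1 z else q2 z))"

text \<open>The two Floquet multipliers (eigenvalues of M, with algebraic multiplicity)
  are the roots mu1, mu2 of the characteristic polynomial det (mu I - M).\<close>
definition floquet_multipliers :: "complex^2^2 \<Rightarrow> complex \<Rightarrow> complex \<Rightarrow> bool" where
  "floquet_multipliers M \<mu>1 \<mu>2 \<longleftrightarrow> (\<forall>\<mu>. det (mat \<mu> - M) = (\<mu> - \<mu>1) * (\<mu> - \<mu>2))"

end

theory Submission
  imports Defs
begin

text \<open>Let p be a nontrivial bounded solution. Since the coefficient cos f is T-periodic, the
  shifted solutions satisfy p(z+2T) = tr M \<cdot> p(z+T) - det M \<cdot> p(z) (Cayley-Hamilton for the
  monodromy M), and det M = exp(2c\<gamma>\<lambda>T) has modulus different from 1 because Re \<lambda> \<noteq> 0.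
  The bounded quantity p(y) p(y+2T) - p(y+T)^2 is multiplied by det M under the shift, so it
  vanishes; hence p is geometric along T-orbits with some ratio \<rho>, which boundedness in both
  directions puts on the unit circle, and which is a root of the characteristic polynomial.
  The other multiplier is det M / \<rho>, off the unit circle.\<close>

definition ode_sol :: "complex \<Rightarrow> (real \<Rightarrow> complex) \<Rightarrow> (real \<Rightarrow> complex) \<Rightarrow> (real \<Rightarrow> complex) \<Rightarrow> bool" where
  "ode_sol A B p q \<longleftrightarrow> (\<forall>z. (p has_vector_derivative q z) (at z) \<and>
      (q has_vector_derivative (A * q z - B z * p z)) (at z))"

lemma ode_sol_lincomb:
  assumes "ode_sol A B p q" "ode_sol A B p' q'"
  shows "ode_sol A B (\<lambda>z. a * p z + b * p' z) (\<lambda>z. a * q z + b * q' z)"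
  unfolding ode_sol_def
proof (intro allI conjI)
  fix z
  show "((\<lambda>z. a * p z + b * p' z) has_vector_derivative a * q z + b * q' z) (at z)"
    using assms by (intro derivative_intros) (auto simp: ode_sol_def)
  have "((\<lambda>z. a * q z + b * q' z) has_vector_derivative
      a * (A * q z - B z * p z) + b * (A * q' z - B z * p' z)) (at z)"
    using assms by (intro derivative_intros) (auto simp: ode_sol_def)
  then show "((\<lambda>z. a * q z + b * q' z) has_vector_derivative
      A * (a * q z + b * q' z) - B z * (a * p z + b * p' z)) (at z)"
    by (simp add: algebra_simps)
qed

lemma has_vector_derivative_shift:
  assumes "(g has_vector_derivative g') (at (z + s))"
  shows "((\<lambda>z. g (z + s)) has_vector_derivative g') (at z)"
proof -
  have "((\<lambda>z. z + s) has_vector_derivative 1) (at z)"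
    by (auto intro!: derivative_eq_intros)
  from vector_diff_chain_at[OF this assms] show ?thesis by (simp add: o_def)
qed

lemma ode_sol_shift:
  assumes "ode_sol A B p q" "\<And>z. B (z + s) = B z"
  shows "ode_sol A B (\<lambda>z. p (z + s)) (\<lambda>z. q (z + s))"
  unfolding ode_sol_def
proof (intro allI conjI)
  fix z
  show "((\<lambda>z. p (z + s)) has_vector_derivative q (z + s)) (at z)"
    using assms by (intro has_vector_derivative_shift) (auto simp: ode_sol_def)
  have "((\<lambda>z. q (z + s)) has_vector_derivative A * q (z + s) - B (z + s) * p (z + s)) (at z)"
    using assms(1) by (intro has_vector_derivative_shift) (auto simp: ode_sol_def)
  then show "((\<lambda>z. q (z + s)) has_vector_derivative A * q (z + s) - B z * p (z + s)) (at z)"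
    using assms(2) by simp
qed

lemma ode_sol_wronskian:
  assumes "ode_sol A B pa qa" "ode_sol A B pb qb"
  shows "pa z * qb z - qa z * pb z = (pa 0 * qb 0 - qa 0 * pb 0) * exp (A * of_real z)"
proof -
  define g where "g z = (pa z * qb z - qa z * pb z) * exp (- (A * of_real z))" for z
  have exp_deriv: "((\<lambda>z. exp (- (A * of_real z))) has_vector_derivative
      exp (- (A * of_real z)) * (- A)) (at z)" for z
  proof -
    have "((\<lambda>w. exp (- (A * w))) has_field_derivative exp (- (A * of_real z)) * (- A)) (at (of_real z))"
      by (auto intro!: derivative_eq_intros)
    from has_vector_derivative_real_field[OF this] show ?thesis by simp
  qed
  have "(g has_vector_derivative 0) (at z within UNIV)" for z
    unfolding g_def
    apply (rule has_vector_derivative_eq_rhs)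
     apply (rule has_vector_derivative_mult[OF has_vector_derivative_diff
          [OF has_vector_derivative_mult has_vector_derivative_mult] exp_deriv])
    using assms by (auto simp: ode_sol_def algebra_simps)
  then obtain k where "\<And>x. g x = k"
    using has_vector_derivative_zero_constant[of UNIV g] by auto
  then have "g z = g 0" by simp
  then have "(pa z * qb z - qa z * pb z) * exp (- (A * of_real z)) * exp (A * of_real z)
      = (pa 0 * qb 0 - qa 0 * pb 0) * exp (A * of_real z)"
    by (simp add: g_def)
  moreover have "exp (- (A * of_real z)) * exp (A * of_real z) = 1"
    by (metis exp_minus_inverse mult.commute)
  ultimately show ?thesis by (metis mult.assoc mult.right_neutral)
qed

lemma ode_sol_fundamental_repr:
  assumes s1: "ode_sol A B p1 q1" and s2: "ode_sol A B p2 q2"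
    and init: "p1 0 = 1" "q1 0 = 0" "p2 0 = 0" "q2 0 = 1"
    and s: "ode_sol A B p q"
  shows "p z = p 0 * p1 z + q 0 * p2 z \<and> q z = p 0 * q1 z + q 0 * q2 z"
proof -
  define u where "u z = 1 * p z + (-1) * (p 0 * p1 z + q 0 * p2 z)" for z
  define w where "w z = 1 * q z + (-1) * (p 0 * q1 z + q 0 * q2 z)" for z
  have sol_uw: "ode_sol A B u w"
    unfolding u_def[abs_def] w_def[abs_def]
    by (rule ode_sol_lincomb[OF s ode_sol_lincomb[OF s1 s2]])
  have "u 0 = 0" "w 0 = 0" using init by (simp_all add: u_def w_def)
  then have W1: "u z * q1 z - w z * p1 z = 0" and W2: "u z * q2 z - w z * p2 z = 0"
    using ode_sol_wronskian[OF sol_uw s1, of z] ode_sol_wronskian[OF sol_uw s2, of z] by simp_all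
  have W12: "p1 z * q2 z - q1 z * p2 z \<noteq> 0"
    using ode_sol_wronskian[OF s1 s2, of z] init by simp
  \<comment> \<open>Cramer's rule: (u, w) is orthogonal to two independent vectors.\<close>
  have "u z * (p1 z * q2 z - q1 z * p2 z) = p1 z * (u z * q2 z - w z * p2 z) - p2 z * (u z * q1 z - w z * p1 z)"
       "w z * (p1 z * q2 z - q1 z * p2 z) = q1 z * (u z * q2 z - w z * p2 z) - q2 z * (u z * q1 z - w z * p1 z)"
    by (simp_all add: algebra_simps)
  then have "u z = 0" "w z = 0" using W1 W2 W12 by simp_all
  then show ?thesis by (simp add: u_def w_def algebra_simps add_eq_0_iff2)
qed

lemma ode_sol_monodromy_recurrence:
  assumes s1: "ode_sol A B p1 q1" and s2: "ode_sol A B p2 q2"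
    and init: "p1 0 = 1" "q1 0 = 0" "p2 0 = 0" "q2 0 = 1"
    and periodic: "\<And>z. B (z + T) = B z"
    and s: "ode_sol A B p q"
  shows "p (z + T + T) = (p1 T + q2 T) * p (z + T) - (p1 T * q2 T - p2 T * q1 T) * p z"
proof -
  have s': "ode_sol A B (\<lambda>z. p (z + T)) (\<lambda>z. q (z + T))"
    by (rule ode_sol_shift[OF s periodic])
  note r0 = ode_sol_fundamental_repr[OF s1 s2 init s]
  note r1 = ode_sol_fundamental_repr[OF s1 s2 init s']
  note r2 = ode_sol_fundamental_repr[OF s1 s2 init ode_sol_shift[OF s' periodic]]
  have "p z = p 0 * p1 z + q 0 * p2 z" "p T = p 0 * p1 T + q 0 * p2 T" "q T = p 0 * q1 T + q 0 * q2 T"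
    using r0 by blast+
  moreover have "p (z + T) = p T * p1 z + q T * p2 z"
      "p (T + T) = p T * p1 T + q T * p2 T" "q (T + T) = p T * q1 T + q T * q2 T"
    using r1[of z] r1[of T] by simp_all
  moreover have "p (z + T + T) = p (T + T) * p1 z + q (T + T) * p2 z"
    using r2[of z] by simp
  ultimately show ?thesis by (simp add: algebra_simps)
qed

lemma norm_le_one_if_bounded_powers:
  fixes r a :: complex
  assumes "\<And>n. cmod (r ^ n * a) \<le> K" "a \<noteq> 0"
  shows "cmod r \<le> 1"
proof (rule ccontr)
  assume "\<not> cmod r \<le> 1"
  then obtain n where n: "K / cmod a < cmod r ^ n"
    using real_arch_pow[of "cmod r" "K / cmod a"] by auto
  have "cmod r ^ n * cmod a \<le> K" using assms(1)[of n] by (simp add: norm_mult norm_power)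
  with n assms(2) show False by (simp add: field_simps)
qed

lemma bounded_multiplicative_shift_eq_0:
  fixes g :: "real \<Rightarrow> complex"
  assumes "\<And>y. g (y + s) = r * g y" "\<And>y. cmod (g y) \<le> K" "cmod r > 1"
  shows "g y = 0"
proof (rule ccontr)
  assume "g y \<noteq> 0"
  have "g (y + real n * s) = r ^ n * g y" for n
  proof (induction n)
    case (Suc n)
    have "g (y + real (Suc n) * s) = g ((y + real n * s) + s)" by (simp add: algebra_simps)
    then show ?case using Suc assms(1) by simp
  qed simp
  then have "cmod (r ^ n * g y) \<le> K" for n using assms(2) by metis
  from norm_le_one_if_bounded_powers[OF this \<open>g y \<noteq> 0\<close>] assms(3) show False by simp
qed

lemma geometric_orbit:
  fixes p :: "real \<Rightarrow> complex"
  assumes geom: "\<And>y. p y * p (y + s + s) = p (y + s) ^ 2" and "p y0 \<noteq> 0" "p (y0 + s) \<noteq> 0"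
  shows "p (y0 + real n * s) = (p (y0 + s) / p y0) ^ n * p y0"
proof -
  define \<rho> where "\<rho> = p (y0 + s) / p y0"
  have "\<rho> \<noteq> 0" using assms by (simp add: \<rho>_def)
  have "p (y0 + real n * s) = \<rho> ^ n * p y0 \<and> p (y0 + real (Suc n) * s) = \<rho> ^ Suc n * p y0"
  proof (induction n)
    case 0 then show ?case using assms by (simp add: \<rho>_def)
  next
    case (Suc n)
    have "y0 + real (Suc (Suc n)) * s = y0 + real n * s + s + s"
      "y0 + real (Suc n) * s = y0 + real n * s + s" by (simp_all add: algebra_simps)
    then have "\<rho> ^ n * p y0 * p (y0 + real (Suc (Suc n)) * s) = \<rho> ^ n * p y0 * (\<rho> ^ Suc (Suc n) * p y0)"
      using geom[of "y0 + real n * s"] Suc by (simp add: power2_eq_square algebra_simps)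
    then show ?case using Suc \<open>\<rho> \<noteq> 0\<close> \<open>p y0 \<noteq> 0\<close> by simp
  qed
  then show ?thesis by (simp add: \<rho>_def)
qed

lemma bounded_recurrence_casoratian_eq_0:
  fixes p :: "real \<Rightarrow> complex"
  assumes rec: "\<And>z. p (z + T + T) = t * p (z + T) - D * p z"
    and bd: "\<And>z. cmod (p z) \<le> K" and "D \<noteq> 0" "cmod D \<noteq> 1"
  shows "p y * p (y + T + T) = p (y + T) ^ 2"
proof -
  define h where "h y = p y * p (y + T + T) - p (y + T) ^ 2" for y
  have shift: "h (y + T) = D * h y" for y
  proof -
    have "h (y + T) = p (y + T) * p (y + T + T + T) - p (y + T + T) ^ 2" by (simp add: h_def)
    also have "\<dots> = D * h y" unfolding rec[of "y + T"] rec[of y] h_def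
      by (simp add: algebra_simps power2_eq_square)
    finally show ?thesis .
  qed
  have "0 \<le> K" using order_trans[OF norm_ge_zero bd] .
  have h_bd: "cmod (h y) \<le> K * K + K ^ 2" for y
  proof -
    have "cmod (h y) \<le> cmod (p y) * cmod (p (y + T + T)) + cmod (p (y + T)) ^ 2"
      unfolding h_def by (metis norm_triangle_ineq4 norm_mult norm_power)
    also have "\<dots> \<le> K * K + K ^ 2"
      using bd \<open>0 \<le> K\<close> by (intro add_mono mult_mono power_mono) auto
    finally show ?thesis .
  qed
  have "h y = 0"
  proof (cases "cmod D > 1")
    case True
    then show ?thesis using bounded_multiplicative_shift_eq_0[of h T D, OF shift h_bd] by blast
  next
    case False
    with \<open>cmod D \<noteq> 1\<close> \<open>D \<noteq> 0\<close> have "cmod (1 / D) > 1" by (simp add: norm_divide)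
    moreover have "h (y + - T) = (1 / D) * h y" for y
      using shift[of "y + - T"] \<open>D \<noteq> 0\<close> by simp
    ultimately show ?thesis using bounded_multiplicative_shift_eq_0[of h "- T" "1 / D", OF _ h_bd] by blast
  qed
  then show ?thesis by (simp add: h_def)
qed

lemma bounded_recurrence_unimodular_root:
  fixes p :: "real \<Rightarrow> complex"
  assumes rec: "\<And>z. p (z + T + T) = t * p (z + T) - D * p z"
    and bd: "\<And>z. cmod (p z) \<le> K" and "p z0 \<noteq> 0" "D \<noteq> 0" "cmod D \<noteq> 1"
  shows "\<exists>\<rho>. cmod \<rho> = 1 \<and> \<rho>\<^sup>2 - t * \<rho> + D = 0"
proof -
  note geom = bounded_recurrence_casoratian_eq_0[of p T t D K, OF rec bd \<open>D \<noteq> 0\<close> \<open>cmod D \<noteq> 1\<close>]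
  have geom_back: "p y * p (y + - T + - T) = p (y + - T) ^ 2" for y
    using geom[of "y - T - T"] by (simp add: mult.commute)
  have fwd: "p (z0 + T) \<noteq> 0"
  proof
    assume "p (z0 + T) = 0"
    with geom[of z0] \<open>p z0 \<noteq> 0\<close> have "p (z0 + T + T) = 0" by simp
    with rec[of z0] \<open>p (z0 + T) = 0\<close> \<open>D \<noteq> 0\<close> \<open>p z0 \<noteq> 0\<close> show False by simp
  qed
  have bwd: "p (z0 + - T) \<noteq> 0"
    using geom[of "z0 - T"] \<open>p z0 \<noteq> 0\<close> by auto
  define \<rho> where "\<rho> = p (z0 + T) / p z0"
  define \<sigma> where "\<sigma> = p (z0 + - T) / p z0"
  have "cmod \<rho> \<le> 1"
    using geometric_orbit[of p T z0, OF geom \<open>p z0 \<noteq> 0\<close> fwd] bd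
    by (intro norm_le_one_if_bounded_powers[OF _ \<open>p z0 \<noteq> 0\<close>, of _ K]) (metis \<rho>_def)
  moreover have "cmod \<sigma> \<le> 1"
    using geometric_orbit[of p "- T" z0, OF geom_back \<open>p z0 \<noteq> 0\<close> bwd] bd
    by (intro norm_le_one_if_bounded_powers[OF _ \<open>p z0 \<noteq> 0\<close>, of _ K]) (metis \<sigma>_def)
  moreover have "\<sigma> * \<rho> = 1"
    using geom[of "z0 - T"] \<open>p z0 \<noteq> 0\<close> by (simp add: \<rho>_def \<sigma>_def power2_eq_square)
  ultimately have "cmod \<rho> = 1"
    by (metis mult_le_one norm_ge_zero norm_mult norm_one order_antisym mult.commute mult_left_le_one_le)
  moreover have "(\<rho>\<^sup>2 - t * \<rho> + D) * p z0 = 0"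
    using rec[of z0] geometric_orbit[of p T z0 2, OF geom \<open>p z0 \<noteq> 0\<close> fwd] \<open>p z0 \<noteq> 0\<close>
    by (simp add: \<rho>_def algebra_simps power2_eq_square)
  ultimately show ?thesis using \<open>p z0 \<noteq> 0\<close> by auto
qed

lemma floquet_multipliers_det:
  "floquet_multipliers M \<mu>1 \<mu>2 \<Longrightarrow> det (mat 0 - M) = \<mu>1 * \<mu>2"
  unfolding floquet_multipliers_def by (erule allE[of _ 0]) simp

lemma floquet_multipliers_root:
  "floquet_multipliers M \<mu>1 \<mu>2 \<Longrightarrow> det (mat \<rho> - M) = 0 \<Longrightarrow> \<rho> = \<mu>1 \<or> \<rho> = \<mu>2"
  by (simp add: floquet_multipliers_def)

lemma det_char_fund_matrix:
  "det (mat \<mu> - fund_matrix p1 q1 p2 q2 T) = \<mu>\<^sup>2 - (p1 T + q2 T) * \<mu> + (p1 T * q2 T - p2 T * q1 T)"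
  by (simp add: det_2 fund_matrix_def mat_def algebra_simps power2_eq_square)

lemma period_mod_2pi_cos:
  "period_mod_2pi f T \<Longrightarrow> cos (f (z + T)) = cos (f z)"
  unfolding period_mod_2pi_def by (metis sin_cos_eq_iff)

theorem lemma3p4:
  fixes c T :: real and f :: "real \<Rightarrow> real" and lam :: complex
    and p1 q1 p2 q2 :: "real \<Rightarrow> complex"
  assumes "c \<noteq> 0" and "c\<^sup>2 \<noteq> 1"
    and "periodic_tw c f"
    and "fundamental_period f T"
    and "lam \<in> sigmaP c f" and "Re lam \<noteq> 0"
    and "fundamental_sols c f lam p1 q1 p2 q2"
  shows "\<forall>\<mu>1 \<mu>2. floquet_multipliers (fund_matrix p1 q1 p2 q2 T) \<mu>1 \<mu>2 \<longrightarrow>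
           ((cmod \<mu>1 = 1) \<noteq> (cmod \<mu>2 = 1))"
proof (intro allI impI)
  fix \<mu>1 \<mu>2
  assume mult: "floquet_multipliers (fund_matrix p1 q1 p2 q2 T) \<mu>1 \<mu>2"
  define A where "A = of_real (2 * c * gam c) * lam"
  define B where "B z = of_real (gam c) * (lam\<^sup>2 + of_real (cos (f z)))" for z
  define D where "D = p1 T * q2 T - p2 T * q1 T"
  have sol_iff: "solP c f lam p q \<longleftrightarrow> ode_sol A B p q" for p q
    by (simp add: solP_def ode_sol_def A_def B_def)
  have "T > 0" and periodic: "\<And>z. B (z + T) = B z"
    using assms(4) period_mod_2pi_cos by (auto simp: fundamental_period_def B_def)
  obtain p q z0 where sol: "ode_sol A B p q" and "p z0 \<noteq> 0" and "bounded (range p)"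
    using assms(5) unfolding sigmaP_def mem_Collect_eq sol_iff by blast
  then obtain K where bd: "\<And>z. cmod (p z) \<le> K" by (auto simp: bounded_iff)
  have s1: "ode_sol A B p1 q1" and s2: "ode_sol A B p2 q2"
    and init: "p1 0 = 1" "q1 0 = 0" "p2 0 = 0" "q2 0 = 1"
    using assms(7) by (auto simp: fundamental_sols_def sol_iff)
  have "D = exp (A * of_real T)"
    using ode_sol_wronskian[OF s1 s2, of T] init by (simp add: D_def mult.commute)
  moreover have "2 * c * gam c * T * Re lam \<noteq> 0"
    using assms(1,2,6) \<open>T > 0\<close> by (simp add: gam_def)
  ultimately have "D \<noteq> 0" "cmod D \<noteq> 1" by (simp_all add: A_def)
  then obtain \<rho> where "cmod \<rho> = 1" "\<rho>\<^sup>2 - (p1 T + q2 T) * \<rho> + D = 0"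
    using bounded_recurrence_unimodular_root[of p T "p1 T + q2 T" D K z0, OF
        ode_sol_monodromy_recurrence[OF s1 s2 init periodic sol, folded D_def] bd]
      \<open>p z0 \<noteq> 0\<close> by blast
  then have "\<rho> = \<mu>1 \<or> \<rho> = \<mu>2"
    using floquet_multipliers_root[OF mult] det_char_fund_matrix by (metis D_def)
  moreover have "\<mu>1 * \<mu>2 = D"
    using floquet_multipliers_det[OF mult] det_char_fund_matrix[of 0] by (simp add: D_def)
  ultimately show "(cmod \<mu>1 = 1) \<noteq> (cmod \<mu>2 = 1)"
    using \<open>cmod \<rho> = 1\<close> \<open>cmod D \<noteq> 1\<close> by (auto simp: norm_mult)
qed

end
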